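(* Fix $\lambda>0$. For every finite graph $G$ of maximum degree at most $\Delta$, every vertex $v$ and every $\epsilon>0$, the algorithm Approx-Marginal$(\lambda,\epsilon,v)$ outputs an estimate $\widehat{p}$ with $|\widehat{p}-p_{G,\lambda}(v)|<\epsilon$ and $|\log \widehat{p}-\log p_{G,\lambda}(v)|<\epsilon$. Its query complexity is at most $\overline{\mathcal{Q}}(\epsilon,\Delta)=\tilde{O}\left((1/\epsilon)^{\tilde{O}(\sqrt{\Delta})}\right)$, and $Q=\overline{\mathcal{Q}}(\epsilon,\Delta)$ satisfies $$\lim_{\Delta\to \infty}\frac{1}{\sqrt{\Delta}\log\Delta} \lim_{\epsilon\to 0}\frac{\log Q}{\log (1/\epsilon)} = \sqrt{\lambda}.$$
   Context: Let $G=(V,E)$ be a finite undirected graph (parallel edges and self-loops allowed), matchings $\mathbb{M}$, $Z(G,\lambda)=\sum_{M\in\mathbb{M}}\lambda^{|M|}$, Gibbs distribution $\pi_{G,\lambda}(M)=\lambda^{|M|}/Z(G,\lambda)$, and $p_{G,\lambda}(v)$ the $\pi_{G,\lambda}$-probability that $v$ is not covered by the matching. The graph is accessed only through oracles: $\mathcal{D}(u)$ returns the degree of $u$, and $\mathcal{N}(u,i)$ returns the $i$-th neighbor of $u$ ($1\le i\le\mathcal{D}(u)$); query complexity is the number of oracle calls. The path-tree $T_G(v)$ has as nodes the simple paths starting at $v$, a path $v_0\dots v_k$ being the parent of $v_0\dots v_kv_{k+1}$; $T^h_G(v)$ is its truncation at depth $h$, and $x^h_v(v)$ is the root value of the solution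 of $x_u=(1+\lambda\sum_{w\text{ child of }u}x_w)^{-1}$ on $T^h_G(v)$ (empty sum $=0$). Algorithm Approx-Marginal$(\lambda,\epsilon,v)$: compute $x^1_v(v),x^2_v(v),\dots$, each by a depth-first exploration of $T^h_G(v)$ using the oracles, and stop at the first $h\ge2$ with $|\log x^h_v(v)-\log x^{h-1}_v(v)|\leq\epsilon/e$; output $\widehat p=x^h_v(v)$. $\tilde{O}$ hides polylogarithmic factors; limits in $\epsilon$ are taken first with $\Delta$ fixed. *)

theory Defs
  imports "HOL-Analysis.Analysis" "HOL-Library.Multiset"
begin

text \<open>A graph is a finite vertex set V, a finite set E of edge identifiers and an
  endpoint map ends; edge e joins fst (ends e) and snd (ends e) (orientation irrelevant);
  a self-loop has equal endpoints.\<close>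

definition graph :: "'v set \<Rightarrow> 'e set \<Rightarrow> ('e \<Rightarrow> 'v \<times> 'v) \<Rightarrow> bool" where
  "graph V E ends \<longleftrightarrow> finite V \<and> finite E \<and>
     (\<forall>e\<in>E. fst (ends e) \<in> V \<and> snd (ends e) \<in> V)"

definition endpoints :: "('e \<Rightarrow> 'v \<times> 'v) \<Rightarrow> 'e \<Rightarrow> 'v set" where
  "endpoints ends e = {fst (ends e), snd (ends e)}"

definition is_matching :: "'e set \<Rightarrow> ('e \<Rightarrow> 'v \<times> 'v) \<Rightarrow> 'e set \<Rightarrow> bool" where
  "is_matching E ends M \<longleftrightarrow> M \<subseteq> E \<and>
     (\<forall>e\<in>M. fst (ends e) \<noteq> snd (ends e)) \<and>
     (\<forall>e\<in>M. \<forall>f\<in>M. e \<noteq> f \<longrightarrow> endpoints ends e \<inter> endpoints ends f = {})"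

definition matchings :: "'e set \<Rightarrow> ('e \<Rightarrow> 'v \<times> 'v) \<Rightarrow> 'e set set" where
  "matchings E ends = {M. is_matching E ends M}"

definition partition_fn :: "'e set \<Rightarrow> ('e \<Rightarrow> 'v \<times> 'v) \<Rightarrow> real \<Rightarrow> real" where
  "partition_fn E ends lam = (\<Sum>M\<in>matchings E ends. lam ^ card M)"

definition covered :: "('e \<Rightarrow> 'v \<times> 'v) \<Rightarrow> 'e set \<Rightarrow> 'v \<Rightarrow> bool" where
  "covered ends M v \<longleftrightarrow> (\<exists>e\<in>M. v \<in> endpoints ends e)"

definition p_marg :: "'e set \<Rightarrow> ('e \<Rightarrow> 'v \<times> 'v) \<Rightarrow> real \<Rightarrow> 'v \<Rightarrow> real" where
  "p_marg E ends lam v =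
     (\<Sum>M\<in>{M\<in>matchings E ends. \<not> covered ends M v}. lam ^ card M) / partition_fn E ends lam"

text \<open>D u is the degree oracle, N u i the i-th neighbour oracle (1 \<le> i \<le> D u).
  They represent the graph if, for every vertex u, the neighbour list
  N u 1, ..., N u (D u) contains, as a multiset, the other endpoint of every
  incident edge; a self-loop at u contributes u twice (standard degree convention).\<close>

definition oracle_rep :: "'v set \<Rightarrow> 'e set \<Rightarrow> ('e \<Rightarrow> 'v \<times> 'v) \<Rightarrow> ('v \<Rightarrow> nat) \<Rightarrow> ('v \<Rightarrow> nat \<Rightarrow> 'v) \<Rightarrow> bool" where
  "oracle_rep V E ends D N \<longleftrightarrow>
     (\<forall>u\<in>V. mset (map (N u) [1..<Suc (D u)]) =
        (\<Sum>e\<in>E. (if fst (ends e) = u then {#snd (ends e)#} else {#}) +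
                 (if snd (ends e) = u then {#fst (ends e)#} else {#})))"

text \<open>xval lam D N r ps is the value x_u at the path-tree node ps (a simple path,
  listed from the root v to its endpoint u = last ps), in the tree truncated so that
  r further levels remain below this node. Children are indexed by neighbour slots
  i = 1..D u (so parallel edges give distinct children), and exist iff N u i is not
  on the path. Hence x^h_v(v) = xval lam D N h [v].\<close>

fun xval :: "real \<Rightarrow> ('v \<Rightarrow> nat) \<Rightarrow> ('v \<Rightarrow> nat \<Rightarrow> 'v) \<Rightarrow> nat \<Rightarrow> 'v list \<Rightarrow> real" where
  "xval lam D N 0 ps = 1"
| "xval lam D N (Suc r) ps =
     1 / (1 + lam * (\<Sum>i\<in>{1..D (last ps)}.
            if N (last ps) i \<notin> set ps then xval lam D N r (ps @ [N (last ps) i]) else 0))"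

text \<open>Number of oracle calls made by the depth-first exploration computing xval:
  at an internal node one call D(u), then for each slot i one call N(u,i), and a
  recursive exploration of the child if it is a new vertex.\<close>

fun dfs_queries :: "('v \<Rightarrow> nat) \<Rightarrow> ('v \<Rightarrow> nat \<Rightarrow> 'v) \<Rightarrow> nat \<Rightarrow> 'v list \<Rightarrow> nat" where
  "dfs_queries D N 0 ps = 0"
| "dfs_queries D N (Suc r) ps =
     1 + (\<Sum>i\<in>{1..D (last ps)}. 1 +
            (if N (last ps) i \<notin> set ps then dfs_queries D N r (ps @ [N (last ps) i]) else 0))"

definition am_stop :: "real \<Rightarrow> real \<Rightarrow> ('v \<Rightarrow> nat) \<Rightarrow> ('v \<Rightarrow> nat \<Rightarrow> 'v) \<Rightarrow> 'v \<Rightarrow> nat" where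
  "am_stop lam eps D N v =
     (LEAST h. 2 \<le> h \<and>
        \<bar>ln (xval lam D N h [v]) - ln (xval lam D N (h - 1) [v])\<bar> \<le> eps / exp 1)"

definition approx_marginal :: "real \<Rightarrow> real \<Rightarrow> ('v \<Rightarrow> nat) \<Rightarrow> ('v \<Rightarrow> nat \<Rightarrow> 'v) \<Rightarrow> 'v \<Rightarrow> real" where
  "approx_marginal lam eps D N v = xval lam D N (am_stop lam eps D N v) [v]"

text \<open>Total query complexity: x^1, ..., x^H are each computed by a fresh DFS.\<close>

definition am_queries :: "real \<Rightarrow> real \<Rightarrow> ('v \<Rightarrow> nat) \<Rightarrow> ('v \<Rightarrow> nat \<Rightarrow> 'v) \<Rightarrow> 'v \<Rightarrow> nat" where
  "am_queries lam eps D N v = (\<Sum>h\<in>{1..am_stop lam eps D N v}. dfs_queries D N h [v])"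

end

theory Submission
  imports Defs "HOL-Real_Asymp.Real_Asymp"
begin

text \<open>
  Conditioning on whether a vertex u is covered gives Godsil's recursion
  p(u) = 1 / (1 + lam * \<Sum> p'(w)), summed over the non-loop edges uw, where p' are the
  marginals of G - u. Unfolding it along simple paths shows that p_{G,lam}(v) is the root
  value of the path-tree recursion with the exact marginals of the graphs G - (path) at
  its leaves, while x^h_v(v) puts the leaf value 1 there, and x^(h-1)_v(v) the leaf value 0.
  The recursion is antitone, so p lies between two consecutive iterates, which justifies the
  stopping rule. In logarithmic coordinates two levels of the recursion form a contraction
  with rate R = (sqrt(lam d + 1) - 1) / (sqrt(lam d + 1) + 1), d = Delta + 1 (a
  Cauchy-Schwarz estimate of the gradient); hence the algorithm stops after
  h = O(log(1/eps) / -ln R) levels, and -ln R ~ 2 / sqrt(lam Delta). Each level costs at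
  most (Delta + 1)^(h+1) queries, which yields the bound and the exponent sqrt lam.
\<close>

section \<open>Matchings and the marginal recursion\<close>

definition edges_avoiding :: "'e set \<Rightarrow> ('e \<Rightarrow> 'v \<times> 'v) \<Rightarrow> 'v set \<Rightarrow> 'e set" where
  "edges_avoiding F ends S = {e\<in>F. endpoints ends e \<inter> S = {}}"

definition other_end :: "('e \<Rightarrow> 'v \<times> 'v) \<Rightarrow> 'v \<Rightarrow> 'e \<Rightarrow> 'v" where
  "other_end ends u e = (if fst (ends e) = u then snd (ends e) else fst (ends e))"

definition proper_edges_at :: "'e set \<Rightarrow> ('e \<Rightarrow> 'v \<times> 'v) \<Rightarrow> 'v \<Rightarrow> 'e set" where
  "proper_edges_at F ends u = {e\<in>F. u \<in> endpoints ends e \<and> fst (ends e) \<noteq> snd (ends e)}"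

lemma matchings_subset_Pow: "matchings F ends \<subseteq> Pow F"
  by (auto simp: matchings_def is_matching_def)

lemma finite_matchings: "finite F \<Longrightarrow> finite (matchings F ends)"
  using matchings_subset_Pow by (metis finite_Pow_iff rev_finite_subset)

lemma empty_in_matchings: "{} \<in> matchings F ends"
  by (simp add: matchings_def is_matching_def)

lemma finite_edges_avoiding: "finite F \<Longrightarrow> finite (edges_avoiding F ends S)"
  by (simp add: edges_avoiding_def)

lemma edges_avoiding_edges_avoiding:
  "edges_avoiding (edges_avoiding F ends S) ends T = edges_avoiding F ends (S \<union> T)"
  by (auto simp: edges_avoiding_def)

lemma uncovered_matchings_eq:
  "{M\<in>matchings F ends. \<not> covered ends M u} = matchings (edges_avoiding F ends {u}) ends"
  by (auto simp: matchings_def is_matching_def covered_def edges_avoiding_def)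

lemma partition_fn_pos:
  assumes "finite F" "lam > 0"
  shows "partition_fn F ends lam > 0"
proof -
  have "lam ^ card ({}::'a set) \<le> partition_fn F ends lam"
    unfolding partition_fn_def
    by (rule member_le_sum) (use assms finite_matchings empty_in_matchings in auto)
  then show ?thesis by simp
qed

lemma partition_fn_nonneg: "lam > 0 \<Longrightarrow> partition_fn F ends lam \<ge> 0"
  unfolding partition_fn_def by (intro sum_nonneg) simp

lemma p_marg_eq_partition_fn_ratio:
  "p_marg F ends lam u = partition_fn (edges_avoiding F ends {u}) ends lam / partition_fn F ends lam"
  unfolding p_marg_def uncovered_matchings_eq partition_fn_def ..

lemma p_marg_bounds:
  assumes "finite F" "lam > 0"
  shows "0 < p_marg F ends lam u" "p_marg F ends lam u \<le> 1"
proof -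
  let ?F' = "edges_avoiding F ends {u}"
  have "partition_fn ?F' ends lam \<le> partition_fn F ends lam"
    unfolding partition_fn_def uncovered_matchings_eq[symmetric]
    by (rule sum_mono2) (use finite_matchings[OF assms(1)] assms(2) in auto)
  moreover have "partition_fn ?F' ends lam > 0"
    using partition_fn_pos[OF finite_edges_avoiding[OF assms(1)] assms(2)] .
  ultimately show "0 < p_marg F ends lam u" "p_marg F ends lam u \<le> 1"
    by (simp_all add: p_marg_eq_partition_fn_ratio)
qed

lemma bij_betw_insert_matchings:
  assumes e: "e \<in> proper_edges_at F ends u"
  shows "bij_betw (insert e) (matchings (edges_avoiding F ends {u, other_end ends u e}) ends)
           {M\<in>matchings F ends. e \<in> M}"
proof -
  let ?G = "edges_avoiding F ends {u, other_end ends u e}"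
  have eF: "e \<in> F" and nl: "fst (ends e) \<noteq> snd (ends e)"
    using e by (auto simp: proper_edges_at_def)
  have ep: "endpoints ends e = {u, other_end ends u e}"
    using e by (auto simp: proper_edges_at_def endpoints_def other_end_def)
  have eG: "e \<notin> ?G" using ep by (auto simp: edges_avoiding_def)
  show ?thesis
  proof (rule bij_betw_imageI)
    show "inj_on (insert e) (matchings ?G ends)"
    proof (rule inj_onI)
      fix x y assume "x \<in> matchings ?G ends" "y \<in> matchings ?G ends" "insert e x = insert e y"
      moreover have "e \<notin> x" "e \<notin> y"
        using calculation eG by (auto simp: matchings_def is_matching_def)
      ultimately show "x = y" by (simp add: insert_ident)
    qed
    have "insert e M' \<in> matchings F ends" if M': "M' \<in> matchings ?G ends" for M'
    proof -
      have sub: "M' \<subseteq> ?G" and nl': "\<forall>f\<in>M'. fst (ends f) \<noteq> snd (ends f)"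
        and dj: "\<forall>f\<in>M'. \<forall>g\<in>M'. f \<noteq> g \<longrightarrow> endpoints ends f \<inter> endpoints ends g = {}"
        using M' by (auto simp: matchings_def is_matching_def)
      have "\<forall>f\<in>M'. endpoints ends f \<inter> endpoints ends e = {}"
        using sub ep by (auto simp: edges_avoiding_def)
      then show ?thesis
        using sub eF nl nl' dj
        by (auto simp: matchings_def is_matching_def edges_avoiding_def Int_commute)
    qed
    moreover have "M \<in> insert e ` matchings ?G ends" if "M \<in> matchings F ends" "e \<in> M" for M
    proof -
      have "M - {e} \<in> matchings ?G ends"
        using that ep by (auto simp: matchings_def is_matching_def edges_avoiding_def)
      then show ?thesis using that by (metis insert_Diff image_eqI)
    qed
    ultimately show "insert e ` matchings ?G ends = {M\<in>matchings F ends. e \<in> M}"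
      by blast
  qed
qed

lemma sum_matchings_containing:
  assumes fin: "finite F" and e: "e \<in> proper_edges_at F ends u"
  shows "(\<Sum>M\<in>{M\<in>matchings F ends. e \<in> M}. lam ^ card M)
       = lam * partition_fn (edges_avoiding F ends {u, other_end ends u e}) ends lam"
proof -
  let ?G = "edges_avoiding F ends {u, other_end ends u e}"
  have eG: "e \<notin> ?G"
    using e by (auto simp: proper_edges_at_def edges_avoiding_def endpoints_def)
  have "(\<Sum>M\<in>{M\<in>matchings F ends. e \<in> M}. lam ^ card M)
      = (\<Sum>M\<in>matchings ?G ends. lam ^ card (insert e M))"
    using sum.reindex_bij_betw[OF bij_betw_insert_matchings[OF e], of "\<lambda>M. lam ^ card M"] by simp
  also have "\<dots> = (\<Sum>M\<in>matchings ?G ends. lam * lam ^ card M)"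
  proof (rule sum.cong)
    fix M assume "M \<in> matchings ?G ends"
    then have "M \<subseteq> ?G" using matchings_subset_Pow by blast
    then have "finite M" "e \<notin> M"
      using finite_edges_avoiding[OF fin] eG by (auto intro: rev_finite_subset)
    then show "lam ^ card (insert e M) = lam * lam ^ card M" by simp
  qed simp
  finally show ?thesis by (simp add: partition_fn_def sum_distrib_left)
qed

lemma partition_fn_decompose:
  assumes fin: "finite F"
  shows "partition_fn F ends lam = partition_fn (edges_avoiding F ends {u}) ends lam
     + lam * (\<Sum>e\<in>proper_edges_at F ends u.
                partition_fn (edges_avoiding F ends {u, other_end ends u e}) ends lam)"
proof -
  let ?A = "{M\<in>matchings F ends. \<not> covered ends M u}"
  let ?B = "{M\<in>matchings F ends. covered ends M u}"
  let ?Be = "\<lambda>e. {M\<in>matchings F ends. e \<in> M}"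
  have finM: "finite (matchings F ends)" using fin finite_matchings by blast
  have "partition_fn F ends lam = (\<Sum>M\<in>?A \<union> ?B. lam ^ card M)"
    unfolding partition_fn_def by (rule sum.cong) auto
  also have "\<dots> = (\<Sum>M\<in>?A. lam ^ card M) + (\<Sum>M\<in>?B. lam ^ card M)"
    by (rule sum.union_disjoint) (use finM in auto)
  also have "?B = (\<Union>e\<in>proper_edges_at F ends u. ?Be e)"
    by (auto simp: matchings_def is_matching_def covered_def proper_edges_at_def)
  also have "(\<Sum>M\<in>\<dots>. lam ^ card M) = (\<Sum>e\<in>proper_edges_at F ends u. \<Sum>M\<in>?Be e. lam ^ card M)"
  proof (rule sum.UNION_disjoint)
    show "finite (proper_edges_at F ends u)" using fin by (simp add: proper_edges_at_def)
    show "\<forall>e\<in>proper_edges_at F ends u. \<forall>f\<in>proper_edges_at F ends u. e \<noteq> f \<longrightarrow> ?Be e \<inter> ?Be f = {}"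
      by (auto simp: matchings_def is_matching_def proper_edges_at_def) blast
  qed (use finM in auto)
  also have "\<dots> = lam * (\<Sum>e\<in>proper_edges_at F ends u.
                partition_fn (edges_avoiding F ends {u, other_end ends u e}) ends lam)"
    unfolding sum_distrib_left by (intro sum.cong refl sum_matchings_containing[OF fin])
  finally show ?thesis
    by (simp add: partition_fn_def uncovered_matchings_eq)
qed

lemma p_marg_recursion:
  assumes fin: "finite F" and lam: "lam > 0"
  shows "p_marg F ends lam u = 1 / (1 + lam * (\<Sum>e\<in>proper_edges_at F ends u.
            p_marg (edges_avoiding F ends {u}) ends lam (other_end ends u e)))"
proof -
  let ?Z1 = "partition_fn (edges_avoiding F ends {u}) ends lam"
  let ?Z2 = "\<lambda>e. partition_fn (edges_avoiding F ends {u, other_end ends u e}) ends lam"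
  let ?T = "\<Sum>e\<in>proper_edges_at F ends u. ?Z2 e"
  have Z1: "?Z1 > 0" using partition_fn_pos[OF finite_edges_avoiding[OF fin] lam] .
  have T: "?T \<ge> 0" using partition_fn_nonneg[OF lam] by (intro sum_nonneg) auto
  have child: "p_marg (edges_avoiding F ends {u}) ends lam (other_end ends u e) = ?Z2 e / ?Z1" for e
    using insert_is_Un[of u "{other_end ends u e}"]
    by (simp add: p_marg_eq_partition_fn_ratio edges_avoiding_edges_avoiding)
  have "p_marg F ends lam u = ?Z1 / (?Z1 + lam * ?T)"
    by (simp add: p_marg_eq_partition_fn_ratio partition_fn_decompose[OF fin, of ends lam u])
  also have "\<dots> = 1 / (1 + lam * (?T / ?Z1))"
    using Z1 T lam by (simp add: field_simps add_pos_nonneg)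
  finally show ?thesis by (simp add: child sum_divide_distrib)
qed


section \<open>The path-tree recursion\<close>

fun tree_val :: "real \<Rightarrow> ('v \<Rightarrow> nat) \<Rightarrow> ('v \<Rightarrow> nat \<Rightarrow> 'v) \<Rightarrow> ('v list \<Rightarrow> real) \<Rightarrow> nat \<Rightarrow> 'v list \<Rightarrow> real" where
  "tree_val lam D N L 0 ps = L ps"
| "tree_val lam D N L (Suc r) ps =
     1 / (1 + lam * (\<Sum>i\<in>{1..D (last ps)}.
            if N (last ps) i \<notin> set ps then tree_val lam D N L r (ps @ [N (last ps) i]) else 0))"

lemma xval_eq_tree_val_one: "xval lam D N r ps = tree_val lam D N (\<lambda>_. 1) r ps"
  by (induction r arbitrary: ps) (simp_all only: xval.simps tree_val.simps)

text \<open>Leaf value 0 makes the last level contribute nothing, so depth r + 1 collapses to depth r.\<close>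

lemma xval_eq_tree_val_zero: "xval lam D N r ps = tree_val lam D N (\<lambda>_. 0) (Suc r) ps"
proof (induction r arbitrary: ps)
  case 0
  have "(\<Sum>i\<in>{1..D (last ps)}. if N (last ps) i \<notin> set ps
          then tree_val lam D N (\<lambda>_. 0) 0 (ps @ [N (last ps) i]) else 0) = 0"
    by (intro sum.neutral) simp
  then show ?case by simp
next
  case (Suc r)
  then show ?case by (simp only: xval.simps tree_val.simps)
qed

lemma one_over_one_plus_bounds:
  fixes lam s :: real
  assumes "lam > 0" "s \<ge> 0"
  shows "0 < 1 / (1 + lam * s)" "1 / (1 + lam * s) \<le> 1"
  using assms by (auto simp: field_simps add_pos_nonneg)

lemma one_over_one_plus_antimono:
  fixes lam s t :: real
  assumes "lam > 0" "0 \<le> s" "s \<le> t"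
  shows "1 / (1 + lam * t) \<le> 1 / (1 + lam * s)"
  using assms by (intro divide_left_mono) (auto simp: add_pos_nonneg mult_left_mono)

lemma tree_val_bounds:
  assumes lam: "lam > 0" and L: "\<And>ps. 0 \<le> L ps \<and> L ps \<le> 1"
  shows "0 \<le> tree_val lam D N L r ps \<and> tree_val lam D N L r ps \<le> 1
       \<and> (r > 0 \<longrightarrow> tree_val lam D N L r ps > 0)"
proof (induction r arbitrary: ps)
  case 0
  then show ?case using L by simp
next
  case (Suc r)
  let ?s = "\<Sum>i\<in>{1..D (last ps)}.
              if N (last ps) i \<notin> set ps then tree_val lam D N L r (ps @ [N (last ps) i]) else 0"
  have "?s \<ge> 0" using Suc.IH by (intro sum_nonneg) auto
  then show ?case using one_over_one_plus_bounds[OF lam, of ?s] by simp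
qed

lemma tree_val_pos:
  assumes "lam > 0" and "\<And>ps. 0 < L ps \<and> L ps \<le> 1"
  shows "tree_val lam D N L r ps > 0"
  using tree_val_bounds[of lam L D N r ps] assms by (cases r) (auto simp: less_imp_le)

lemma xval_pos: "lam > 0 \<Longrightarrow> xval lam D N h ps > 0"
  unfolding xval_eq_tree_val_one by (rule tree_val_pos) auto

lemma xval_le_one: "lam > 0 \<Longrightarrow> xval lam D N h ps \<le> 1"
  unfolding xval_eq_tree_val_one using tree_val_bounds[of lam "\<lambda>_. 1" D N h ps] by simp

lemma tree_val_alternating_mono:
  assumes lam: "lam > 0"
    and L: "\<And>ps. 0 \<le> L ps \<and> L ps \<le> 1" and L': "\<And>ps. 0 \<le> L' ps \<and> L' ps \<le> 1"
    and le: "\<And>ps. L ps \<le> L' ps"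
  shows "(even r \<longrightarrow> tree_val lam D N L r ps \<le> tree_val lam D N L' r ps) \<and>
         (odd r \<longrightarrow> tree_val lam D N L' r ps \<le> tree_val lam D N L r ps)"
proof (induction r arbitrary: ps)
  case 0
  then show ?case using le by simp
next
  case (Suc r)
  let ?s = "\<lambda>L. \<Sum>i\<in>{1..D (last ps)}.
              if N (last ps) i \<notin> set ps then tree_val lam D N L r (ps @ [N (last ps) i]) else 0"
  have s: "?s L \<ge> 0" using tree_val_bounds[where L=L, OF lam L] by (intro sum_nonneg) auto
  have s': "?s L' \<ge> 0" using tree_val_bounds[where L=L', OF lam L'] by (intro sum_nonneg) auto
  show ?case
  proof (intro conjI impI)
    assume "even (Suc r)"
    then have "?s L' \<le> ?s L" using Suc.IH by (intro sum_mono) auto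
    then show "tree_val lam D N L (Suc r) ps \<le> tree_val lam D N L' (Suc r) ps"
      using one_over_one_plus_antimono[OF lam s'] by simp
  next
    assume "odd (Suc r)"
    then have "?s L \<le> ?s L'" using Suc.IH by (intro sum_mono) auto
    then show "tree_val lam D N L' (Suc r) ps \<le> tree_val lam D N L (Suc r) ps"
      using one_over_one_plus_antimono[OF lam s] by simp
  qed
qed

lemma tree_val_Suc_Suc:
  "tree_val lam D N L (Suc (Suc r)) ps =
   1 / (1 + lam * (\<Sum>i\<in>{i\<in>{1..D (last ps)}. N (last ps) i \<notin> set ps}.
      1 / (1 + lam * (\<Sum>j\<in>{j\<in>{1..D (N (last ps) i)}. N (N (last ps) i) j \<notin> set (ps @ [N (last ps) i])}.
         tree_val lam D N L r (ps @ [N (last ps) i, N (N (last ps) i) j])))))"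
  by (simp only: tree_val.simps sum.inter_filter[OF finite_atLeastAtMost]
      last_snoc append_assoc append_Cons append_Nil)

definition simple_path :: "'v set \<Rightarrow> 'v list \<Rightarrow> bool" where
  "simple_path V ps \<longleftrightarrow> ps \<noteq> [] \<and> distinct ps \<and> set ps \<subseteq> V"

definition path_marg :: "'e set \<Rightarrow> ('e \<Rightarrow> 'v \<times> 'v) \<Rightarrow> real \<Rightarrow> 'v list \<Rightarrow> real" where
  "path_marg E ends lam ps = p_marg (edges_avoiding E ends (set (butlast ps))) ends lam (last ps)"

lemma path_marg_bounds:
  assumes "finite E" "lam > 0"
  shows "0 < path_marg E ends lam ps \<and> path_marg E ends lam ps \<le> 1"
  unfolding path_marg_def by (simp add: p_marg_bounds finite_edges_avoiding assms)

lemma path_marg_singleton: "path_marg E ends lam [v] = p_marg E ends lam v"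
  by (simp add: path_marg_def edges_avoiding_def)

lemma sum_mset_image_sum:
  assumes "finite A"
  shows "sum_mset (image_mset h (\<Sum>e\<in>A. f e)) = (\<Sum>e\<in>A. sum_mset (image_mset h (f e)))"
  using assms by (induction A rule: finite_induct) auto

text \<open>A loop at u contributes u itself, which is on the path, so only non-loop edges survive.\<close>

lemma sum_mset_incident_edge:
  assumes e: "e \<in> E" and u: "u \<notin> S"
  shows "sum_mset (image_mset (\<lambda>w. if w \<notin> insert u S then Q w else 0)
           ((if fst (ends e) = u then {#snd (ends e)#} else {#}) +
            (if snd (ends e) = u then {#fst (ends e)#} else {#}))) =
         (if e \<in> proper_edges_at (edges_avoiding E ends S) ends u then Q (other_end ends u e) else 0)"
  using e u
  by (cases "fst (ends e) = u"; cases "snd (ends e) = u")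
     (auto simp: proper_edges_at_def edges_avoiding_def endpoints_def other_end_def)

locale oracle_graph =
  fixes V :: "'v set" and E :: "'e set" and ends :: "'e \<Rightarrow> 'v \<times> 'v"
    and D :: "'v \<Rightarrow> nat" and N :: "'v \<Rightarrow> nat \<Rightarrow> 'v" and \<Delta> :: nat
  assumes graph: "graph V E ends" and represents: "oracle_rep V E ends D N"
    and degree_le: "\<And>u. u \<in> V \<Longrightarrow> D u \<le> \<Delta>"
begin

lemma finite_E: "finite E"
  using graph by (simp add: graph_def)

lemma neighbour_mset:
  "u \<in> V \<Longrightarrow> mset (map (N u) [1..<Suc (D u)]) =
        (\<Sum>e\<in>E. (if fst (ends e) = u then {#snd (ends e)#} else {#}) +
                 (if snd (ends e) = u then {#fst (ends e)#} else {#}))"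
  using represents by (simp add: oracle_rep_def)

lemma neighbour_in_V:
  assumes u: "u \<in> V" and i: "1 \<le> i" "i \<le> D u"
  shows "N u i \<in> V"
proof -
  have "i \<in> set [1..<Suc (D u)]" using i by auto
  then have "N u i \<in> set (map (N u) [1..<Suc (D u)])" unfolding set_map by (rule imageI)
  then have "N u i \<in># mset (map (N u) [1..<Suc (D u)])" by (simp only: set_mset_mset)
  then obtain e where "e \<in> E" "N u i = snd (ends e) \<or> N u i = fst (ends e)"
    unfolding neighbour_mset[OF u] set_mset_sum[OF finite_E] by (auto split: if_splits)
  then show ?thesis using graph by (auto simp: graph_def)
qed

lemma degree_last_le: "simple_path V ps \<Longrightarrow> D (last ps) \<le> \<Delta>"
  unfolding simple_path_def using degree_le last_in_set by blast

lemma simple_path_snoc: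
  assumes "simple_path V ps" "1 \<le> i" "i \<le> D (last ps)" "N (last ps) i \<notin> set ps"
  shows "simple_path V (ps @ [N (last ps) i])"
proof -
  have "last ps \<in> V" using assms(1) by (auto simp: simple_path_def)
  then show ?thesis using neighbour_in_V assms by (auto simp: simple_path_def)
qed

lemma sum_slots_eq_sum_proper_edges:
  assumes p: "simple_path V ps"
  shows "(\<Sum>i\<in>{1..D (last ps)}. if N (last ps) i \<notin> set ps then Q (N (last ps) i) else 0) =
         (\<Sum>e\<in>proper_edges_at (edges_avoiding E ends (set (butlast ps))) ends (last ps).
            Q (other_end ends (last ps) e))"
proof -
  let ?u = "last ps" and ?S = "set (butlast ps)"
  let ?F = "proper_edges_at (edges_avoiding E ends ?S) ends ?u"
  let ?h = "\<lambda>w. if w \<notin> insert ?u ?S then Q w else 0"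
  have u: "?u \<in> V" using p by (auto simp: simple_path_def)
  obtain xs w where "ps = xs @ [w]" using p by (metis simple_path_def rev_exhaust)
  then have uS: "?u \<notin> ?S" and set_ps: "set ps = insert ?u ?S"
    using p by (auto simp: simple_path_def)
  have "{1..<Suc (D ?u)} = {1..D ?u}" by auto
  then have "(\<Sum>i\<in>{1..D ?u}. ?h (N ?u i)) = sum_list (map ?h (map (N ?u) [1..<Suc (D ?u)]))"
    by (simp only: map_map interv_sum_list_conv_sum_set_nat set_upt comp_def)
  also have "\<dots> = sum_mset (image_mset ?h (mset (map (N ?u) [1..<Suc (D ?u)])))"
    by (simp only: mset_map[symmetric] sum_mset_sum_list)
  also have "\<dots> = (\<Sum>e\<in>E. if e \<in> ?F then Q (other_end ends ?u e) else 0)"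
    unfolding neighbour_mset[OF u] sum_mset_image_sum[OF finite_E]
    by (intro sum.cong refl sum_mset_incident_edge uS)
  also have "\<dots> = (\<Sum>e\<in>?F. Q (other_end ends ?u e))"
    using sum.inter_restrict[OF finite_E, of "\<lambda>e. Q (other_end ends ?u e)" ?F]
    by (simp add: Int_absorb1 proper_edges_at_def edges_avoiding_def subset_iff)
  finally show ?thesis by (simp add: set_ps)
qed


lemma path_marg_recursion:
  assumes p: "simple_path V ps" and lam: "lam > 0"
  shows "path_marg E ends lam ps = 1 / (1 + lam * (\<Sum>i\<in>{1..D (last ps)}.
            if N (last ps) i \<notin> set ps then path_marg E ends lam (ps @ [N (last ps) i]) else 0))"
proof -
  let ?u = "last ps" and ?S = "set (butlast ps)"
  let ?F = "edges_avoiding E ends ?S"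
  have "edges_avoiding ?F ends {?u} = edges_avoiding E ends (set ps)"
    using p unfolding edges_avoiding_edges_avoiding simple_path_def
    by (metis Un_insert_right append_butlast_last_id empty_set list.simps(15) set_append sup_bot.right_neutral)
  then have child: "p_marg (edges_avoiding ?F ends {?u}) ends lam w = path_marg E ends lam (ps @ [w])" for w
    by (simp add: path_marg_def)
  have "path_marg E ends lam ps = 1 / (1 + lam * (\<Sum>e\<in>proper_edges_at ?F ends ?u.
          path_marg E ends lam (ps @ [other_end ends ?u e])))"
    unfolding path_marg_def[of E ends lam ps] p_marg_recursion[OF finite_edges_avoiding[OF finite_E] lam]
    by (simp only: child)
  then show ?thesis
    using sum_slots_eq_sum_proper_edges[OF p, of "\<lambda>w. path_marg E ends lam (ps @ [w])"] by simp
qed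

lemma tree_val_path_marg:
  assumes "simple_path V ps" and lam: "lam > 0"
  shows "tree_val lam D N (path_marg E ends lam) r ps = path_marg E ends lam ps"
  using assms(1)
proof (induction r arbitrary: ps)
  case 0
  then show ?case by simp
next
  case (Suc r)
  have "(\<Sum>i\<in>{1..D (last ps)}. if N (last ps) i \<notin> set ps
           then tree_val lam D N (path_marg E ends lam) r (ps @ [N (last ps) i]) else 0)
      = (\<Sum>i\<in>{1..D (last ps)}. if N (last ps) i \<notin> set ps
           then path_marg E ends lam (ps @ [N (last ps) i]) else 0)"
    using Suc.IH simple_path_snoc[OF Suc.prems] by (intro sum.cong) auto
  then show ?case using path_marg_recursion[OF Suc.prems lam] by simp
qed

lemma tree_val_Suc_lower:
  assumes p: "simple_path V ps" and lam: "lam > 0" and L: "\<And>ps. 0 \<le> L ps \<and> L ps \<le> 1"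
  shows "1 / (1 + lam * real \<Delta>) \<le> tree_val lam D N L (Suc r) ps"
proof -
  let ?s = "\<Sum>i\<in>{1..D (last ps)}.
              if N (last ps) i \<notin> set ps then tree_val lam D N L r (ps @ [N (last ps) i]) else 0"
  have s0: "?s \<ge> 0" using tree_val_bounds[where L=L, OF lam L] by (intro sum_nonneg) auto
  have "?s \<le> (\<Sum>i\<in>{1..D (last ps)}. 1)" using tree_val_bounds[where L=L, OF lam L] by (intro sum_mono) auto
  also have "\<dots> \<le> \<Delta>" using degree_last_le[OF p] by simp
  finally show ?thesis using one_over_one_plus_antimono[OF lam s0] by simp
qed

lemma path_marg_lower:
  assumes "simple_path V ps" and lam: "lam > 0"
  shows "1 / (1 + lam * real \<Delta>) \<le> path_marg E ends lam ps"
proof -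
  have "\<And>ps. 0 \<le> path_marg E ends lam ps \<and> path_marg E ends lam ps \<le> 1"
    using path_marg_bounds[OF finite_E lam] less_imp_le by blast
  from tree_val_Suc_lower[where L="path_marg E ends lam" and r=0, OF assms this]
  show ?thesis by (simp only: tree_val_path_marg[OF assms])
qed

end

section \<open>Contraction in logarithmic coordinates\<close>

definition contraction_rate :: "real \<Rightarrow> real \<Rightarrow> real" where
  "contraction_rate lam d = (sqrt (lam * d + 1) - 1) / (sqrt (lam * d + 1) + 1)"

lemma contraction_rate_bounds:
  assumes "lam > 0" "d > 0"
  shows "0 < contraction_rate lam d" "contraction_rate lam d < 1"
proof -
  have "sqrt (lam * d + 1) > 1" using assms by simp
  then have "sqrt (lam * d + 1) - 1 > 0" "sqrt (lam * d + 1) + 1 > 0" by linarith+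
  then show "0 < contraction_rate lam d" "contraction_rate lam d < 1"
    unfolding contraction_rate_def by auto
qed

text \<open>With K = s^2 - 1, the gap between the two sides times K (s + 1) is (s + 1) (t - (s - 1))^2.\<close>

lemma linear_minus_quadratic_le:
  fixes t K :: real
  assumes K: "K > 0"
  shows "t - t^2 / K \<le> (sqrt (K + 1) - 1) / (sqrt (K + 1) + 1) * (1 + t)"
proof -
  define s where "s = sqrt (K + 1)"
  have s1: "s > 1" using K by (simp add: s_def)
  have sK: "s^2 = K + 1" using K by (simp add: s_def)
  have "(s - 1) * (1 + t) * K - (t - t^2 / K) * (K * (s + 1))
      = (s - 1) * (1 + t) * K - (t * K - t^2) * (s + 1)"
    using K by (simp add: field_simps)
  also have "\<dots> = (s + 1) * (t - (s - 1))^2"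
  proof -
    have K_eq: "K = s^2 - 1" using sK by simp
    show ?thesis unfolding K_eq by (simp add: algebra_simps power2_eq_square)
  qed
  finally have "(s - 1) * (1 + t) * K - (t - t^2 / K) * (K * (s + 1)) = (s + 1) * (t - (s - 1))^2" .
  then have key: "(t - t^2 / K) * (K * (s + 1)) \<le> (s - 1) * (1 + t) * K"
    using s1 by (smt (verit) zero_le_power2 mult_nonneg_nonneg)
  have pos: "K * (s + 1) > 0" using K s1 by simp
  have "t - t^2 / K \<le> (s - 1) * (1 + t) * K / (K * (s + 1))"
    by (subst pos_le_divide_eq[OF pos]) (rule key)
  also have "\<dots> = (s - 1) / (s + 1) * (1 + t)"
  proof -
    have ne: "s + 1 \<noteq> 0" "K \<noteq> 0" using K s1 by auto
    then show ?thesis by (simp add: divide_simps)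
  qed
  finally show ?thesis by (simp add: s_def)
qed

lemma sum_mult_one_minus_le:
  fixes lam d :: real and A :: "'i set" and x :: "'i \<Rightarrow> real"
  assumes lam: "lam > 0" and fin: "finite A" and card: "real (card A) \<le> d" and d: "d > 0"
  shows "lam * (\<Sum>i\<in>A. x i * (1 - x i)) \<le> contraction_rate lam d * (1 + lam * (\<Sum>i\<in>A. x i))"
proof (cases "A = {}")
  case True then show ?thesis using contraction_rate_bounds[OF lam d] by simp
next
  case False
  define s where "s = (\<Sum>i\<in>A. x i)"
  define q where "q = (\<Sum>i\<in>A. (x i)^2)"
  have cpos: "real (card A) > 0" using False fin by (simp add: card_gt_0_iff)
  have cs: "s^2 \<le> q * real (card A)" unfolding s_def q_def by (rule sum_squared_le_sum_of_squares)
  have "s^2 / d \<le> s^2 / real (card A)" using cpos card by (intro divide_left_mono) auto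
  also have "\<dots> \<le> q" using cs cpos by (simp add: divide_le_eq)
  finally have qge: "s^2 / d \<le> q" .
  have lhs: "(\<Sum>i\<in>A. x i * (1 - x i)) = s - q"
    unfolding s_def q_def by (simp add: algebra_simps power2_eq_square sum_subtractf)
  have "lam * (s - q) \<le> lam * (s - s^2 / d)" using qge lam by (intro mult_left_mono) auto
  also have "\<dots> = lam * s - (lam * s)^2 / (lam * d)" using lam d by (simp add: field_simps power2_eq_square)
  also have "\<dots> \<le> contraction_rate lam d * (1 + lam * s)"
    using linear_minus_quadratic_le[of "lam * d" "lam * s"] lam d by (simp add: contraction_rate_def)
  finally show ?thesis using lhs s_def by simp
qed

lemma two_level_gradient_bound:
  fixes lam d \<delta> :: real and A :: "'i set" and S S' :: "'i \<Rightarrow> real"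
  assumes lam: "lam > 0" and fin: "finite A" and card: "real (card A) \<le> d" and d: "d > 0"
    and \<delta>: "\<delta> \<ge> 0" and S: "\<And>i. S i \<ge> 0" and S': "\<And>i. i \<in> A \<Longrightarrow> \<bar>S' i\<bar> \<le> \<delta> * S i"
  shows "\<bar>lam * (\<Sum>i\<in>A. - (lam * S' i) / (1 + lam * S i)^2)\<bar> / (1 + lam * (\<Sum>i\<in>A. 1 / (1 + lam * S i)))
         \<le> contraction_rate lam d * \<delta>"
proof -
  define X where "X i = 1 / (1 + lam * S i)" for i
  define G where "G = 1 + lam * (\<Sum>i\<in>A. X i)"
  have den: "1 + lam * S i > 0" for i using S[of i] lam by (simp add: add_pos_nonneg)
  have X: "0 \<le> X i \<and> X i \<le> 1" for i
    unfolding X_def using one_over_one_plus_bounds[OF lam S] by (simp add: less_imp_le)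
  have G: "G \<ge> 1" unfolding G_def using X lam by (simp add: sum_nonneg)
  have summand: "\<bar>- (lam * S' i) / (1 + lam * S i)^2\<bar> \<le> \<delta> * (X i * (1 - X i))" if "i \<in> A" for i
  proof -
    have "\<bar>- (lam * S' i) / (1 + lam * S i)^2\<bar> = lam * \<bar>S' i\<bar> / (1 + lam * S i)^2"
      using lam by (simp add: abs_mult)
    also have "\<dots> \<le> lam * (\<delta> * S i) / (1 + lam * S i)^2"
      using S'[OF that] lam by (intro divide_right_mono mult_left_mono) auto
    also have "\<dots> = \<delta> * (X i * (1 - X i))"
      unfolding X_def using den[of i] by (simp add: field_simps power2_eq_square)
    finally show ?thesis .
  qed
  have "\<bar>lam * (\<Sum>i\<in>A. - (lam * S' i) / (1 + lam * S i)^2)\<bar>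
      \<le> lam * (\<Sum>i\<in>A. \<bar>- (lam * S' i) / (1 + lam * S i)^2\<bar>)"
    unfolding abs_mult abs_of_pos[OF lam] by (rule mult_left_mono[OF sum_abs]) (use lam in simp)
  also have "\<dots> \<le> lam * (\<Sum>i\<in>A. \<delta> * (X i * (1 - X i)))"
    using lam summand by (intro mult_left_mono sum_mono) auto
  also have "\<dots> = \<delta> * (lam * (\<Sum>i\<in>A. X i * (1 - X i)))"
    by (simp add: sum_distrib_left algebra_simps)
  also have "\<dots> \<le> \<delta> * (contraction_rate lam d * G)"
    using sum_mult_one_minus_le[OF lam fin card d, of X] \<delta> unfolding G_def
    by (intro mult_left_mono) auto
  finally show ?thesis
    using G by (simp add: X_def G_def divide_le_eq mult.commute mult.left_commute)
qed

lemma has_real_derivative_ln_one_plus_sum_inverse: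
  fixes S S' :: "real \<Rightarrow> 'i \<Rightarrow> real"
  assumes lam: "lam > 0" and S: "\<And>\<tau> i. S \<tau> i \<ge> 0"
    and dS: "\<And>i. ((\<lambda>\<tau>. S \<tau> i) has_real_derivative S' \<tau> i) (at \<tau>)"
  shows "((\<lambda>\<tau>. ln (1 + lam * (\<Sum>i\<in>A. 1 / (1 + lam * S \<tau> i)))) has_real_derivative
           lam * (\<Sum>i\<in>A. - (lam * S' \<tau> i) / (1 + lam * S \<tau> i)^2)
           / (1 + lam * (\<Sum>i\<in>A. 1 / (1 + lam * S \<tau> i)))) (at \<tau>)"
proof -
  have "((\<lambda>\<tau>. 1 / (1 + lam * S \<tau> i)) has_real_derivative
           - (lam * S' \<tau> i) / (1 + lam * S \<tau> i)^2) (at \<tau>)" for i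
  proof -
    have "1 + lam * S \<tau> i > 0" using S[of \<tau> i] lam by (simp add: add_pos_nonneg)
    then show ?thesis using dS[of i] by (auto intro!: derivative_eq_intros simp: power2_eq_square)
  qed
  then have "((\<lambda>\<tau>. \<Sum>i\<in>A. 1 / (1 + lam * S \<tau> i)) has_real_derivative
               (\<Sum>i\<in>A. - (lam * S' \<tau> i) / (1 + lam * S \<tau> i)^2)) (at \<tau>)"
    by (rule DERIV_sum)
  from DERIV_add[OF DERIV_const DERIV_cmult[OF this, of lam], of 1]
  have der: "((\<lambda>\<tau>. 1 + lam * (\<Sum>i\<in>A. 1 / (1 + lam * S \<tau> i))) has_real_derivative
          lam * (\<Sum>i\<in>A. - (lam * S' \<tau> i) / (1 + lam * S \<tau> i)^2)) (at \<tau>)"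
    by simp
  have "0 < 1 + lam * (\<Sum>i\<in>A. 1 / (1 + lam * S \<tau> i))"
    using one_over_one_plus_bounds[OF lam S] lam by (simp add: add_pos_nonneg sum_nonneg less_imp_le)
  with DERIV_chain2[OF DERIV_ln_divide der] show ?thesis by simp
qed

text \<open>
  In logarithmic coordinates two levels of the recursion are Lipschitz with constant
  contraction_rate lam d: apply the mean value theorem along the segment from ln a to ln b.
\<close>

lemma two_level_log_lipschitz:
  fixes lam d \<delta> :: real and A :: "'i set" and B :: "'i \<Rightarrow> 'j set" and a b :: "'i \<Rightarrow> 'j \<Rightarrow> real"
  assumes lam: "lam > 0" and fin: "finite A" and card: "real (card A) \<le> d" and d: "d > 0"
    and \<delta>: "\<delta> \<ge> 0"
    and a: "\<And>i j. i \<in> A \<Longrightarrow> j \<in> B i \<Longrightarrow> 0 < a i j"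
    and b: "\<And>i j. i \<in> A \<Longrightarrow> j \<in> B i \<Longrightarrow> 0 < b i j"
    and ab: "\<And>i j. i \<in> A \<Longrightarrow> j \<in> B i \<Longrightarrow> \<bar>ln (a i j) - ln (b i j)\<bar> \<le> \<delta>"
  shows "\<bar>ln (1 / (1 + lam * (\<Sum>i\<in>A. 1 / (1 + lam * (\<Sum>j\<in>B i. a i j)))))
         - ln (1 / (1 + lam * (\<Sum>i\<in>A. 1 / (1 + lam * (\<Sum>j\<in>B i. b i j)))))\<bar>
         \<le> contraction_rate lam d * \<delta>"
proof -
  define c where "c i j = ln (a i j)" for i j
  define dd where "dd i j = ln (b i j) - ln (a i j)" for i j
  define S where "S \<tau> i = (\<Sum>j\<in>B i. exp (c i j + \<tau> * dd i j))" for \<tau> i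
  define S' where "S' \<tau> i = (\<Sum>j\<in>B i. dd i j * exp (c i j + \<tau> * dd i j))" for \<tau> i
  define G where "G \<tau> = 1 + lam * (\<Sum>i\<in>A. 1 / (1 + lam * S \<tau> i))" for \<tau>
  define G' where "G' \<tau> = lam * (\<Sum>i\<in>A. - (lam * S' \<tau> i) / (1 + lam * S \<tau> i)^2)" for \<tau>
  have S: "S \<tau> i \<ge> 0" for \<tau> i unfolding S_def by (intro sum_nonneg) auto
  have G: "G \<tau> \<ge> 1" for \<tau>
    unfolding G_def using one_over_one_plus_bounds[OF lam S] lam by (simp add: sum_nonneg less_imp_le)
  have G0: "G 0 = 1 + lam * (\<Sum>i\<in>A. 1 / (1 + lam * (\<Sum>j\<in>B i. a i j)))"
    unfolding G_def S_def c_def using a by (simp cong: sum.cong)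
  have G1: "G 1 = 1 + lam * (\<Sum>i\<in>A. 1 / (1 + lam * (\<Sum>j\<in>B i. b i j)))"
    unfolding G_def S_def c_def dd_def using a b by (simp cong: sum.cong)
  have "((\<lambda>\<tau>. S \<tau> i) has_real_derivative S' \<tau> i) (at \<tau>)" for \<tau> i
    unfolding S_def S'_def by (rule DERIV_sum) (auto intro!: derivative_eq_intros)
  then have "((\<lambda>\<tau>. ln (G \<tau>)) has_real_derivative G' \<tau> / G \<tau>) (at \<tau>)" for \<tau>
    unfolding G_def G'_def by (rule has_real_derivative_ln_one_plus_sum_inverse[OF lam S])
  then obtain z where z: "ln (G 1) - ln (G 0) = G' z / G z"
    using MVT2[of 0 1 "\<lambda>\<tau>. ln (G \<tau>)" "\<lambda>\<tau>. G' \<tau> / G \<tau>"] by auto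
  have "\<bar>S' z i\<bar> \<le> \<delta> * S z i" if "i \<in> A" for i
  proof -
    have "\<bar>S' z i\<bar> \<le> (\<Sum>j\<in>B i. \<bar>dd i j\<bar> * exp (c i j + z * dd i j))"
      unfolding S'_def by (rule order_trans[OF sum_abs]) (simp add: abs_mult)
    also have "\<dots> \<le> (\<Sum>j\<in>B i. \<delta> * exp (c i j + z * dd i j))"
      using ab[OF that] by (intro sum_mono mult_right_mono) (auto simp: dd_def abs_minus_commute)
    finally show ?thesis unfolding S_def by (simp add: sum_distrib_left)
  qed
  then have "\<bar>G' z / G z\<bar> \<le> contraction_rate lam d * \<delta>"
    using two_level_gradient_bound[OF lam fin card d \<delta> S] G[of z]
    unfolding G_def G'_def by simp
  moreover have "ln (1 / G 0) - ln (1 / G 1) = ln (G 1) - ln (G 0)"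
    using G by (simp add: ln_div)
  ultimately show ?thesis using z by (simp only: G0 G1)
qed

lemma abs_ln_diff_le:
  fixes a b m :: real
  assumes "0 < m" "m \<le> a" "a \<le> 1" "m \<le> b" "b \<le> 1"
  shows "\<bar>ln a - ln b\<bar> \<le> - ln m"
proof -
  have "ln m \<le> ln a" "ln a \<le> 0" "ln m \<le> ln b" "ln b \<le> 0" using assms by auto
  then show ?thesis by linarith
qed

lemma abs_diff_le_abs_ln_diff:
  fixes a b :: real
  assumes "0 < a" "a \<le> 1" "0 < b" "b \<le> 1"
  shows "\<bar>a - b\<bar> \<le> \<bar>ln a - ln b\<bar>"
proof -
  have "y - x \<le> ln y - ln x" if "0 < x" "x \<le> y" "y \<le> 1" for x y :: real
  proof -
    have "ln (x / y) \<le> x / y - 1" using that by (intro ln_le_minus_one) auto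
    then have "1 - x / y \<le> ln y - ln x" using that by (simp add: ln_div)
    moreover have "y - x \<le> (y - x) / y" using that by (simp add: le_divide_eq mult_left_le)
    ultimately show ?thesis using that by (simp add: diff_divide_distrib)
  qed
  from this[of a b] this[of b a] assms show ?thesis by (cases "a \<le> b") auto
qed

text \<open>
  Leaf values in (1 / (1 + lam Delta), 1] differ by at most initial_log_error in logarithmic
  scale; Delta + 1 rather than Delta keeps the contraction rate positive for Delta = 0.
\<close>

definition initial_log_error :: "real \<Rightarrow> nat \<Rightarrow> real" where
  "initial_log_error lam \<Delta> = ln (1 + lam * (real \<Delta> + 1))"

definition depth_error :: "real \<Rightarrow> nat \<Rightarrow> nat \<Rightarrow> real" where
  "depth_error lam \<Delta> r = contraction_rate lam (real \<Delta> + 1) ^ (r div 2) * initial_log_error lam \<Delta>"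

lemma initial_log_error_pos: "lam > 0 \<Longrightarrow> initial_log_error lam \<Delta> > 0"
  by (simp add: initial_log_error_def add_pos_nonneg)

lemma ln_inverse_le_initial_log_error:
  "lam > 0 \<Longrightarrow> - ln (1 / (1 + lam * real \<Delta>)) \<le> initial_log_error lam \<Delta>"
  by (simp add: initial_log_error_def ln_div add_pos_nonneg)

lemma depth_error_nonneg: "lam > 0 \<Longrightarrow> depth_error lam \<Delta> r \<ge> 0"
  using contraction_rate_bounds[of lam "real \<Delta> + 1"] initial_log_error_pos[of lam \<Delta>]
  by (simp add: depth_error_def)

lemma depth_error_antimono:
  assumes "lam > 0" "r \<le> r'"
  shows "depth_error lam \<Delta> r' \<le> depth_error lam \<Delta> r"
  using contraction_rate_bounds[of lam "real \<Delta> + 1"] initial_log_error_pos[of lam \<Delta>] assms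
  by (simp add: depth_error_def power_decreasing div_le_mono)

context oracle_graph
begin

lemma tree_val_Suc_log_dist_le:
  assumes p: "simple_path V ps" and lam: "lam > 0"
    and L: "\<And>ps. 0 \<le> L ps \<and> L ps \<le> 1" and L': "\<And>ps. 0 \<le> L' ps \<and> L' ps \<le> 1"
  shows "\<bar>ln (tree_val lam D N L (Suc r) ps) - ln (tree_val lam D N L' (Suc r) ps)\<bar>
         \<le> initial_log_error lam \<Delta>"
proof -
  have m: "0 < 1 / (1 + lam * real \<Delta>)" using lam by (simp add: add_pos_nonneg)
  have "1 / (1 + lam * real \<Delta>) \<le> tree_val lam D N K (Suc r) ps"
    and "tree_val lam D N K (Suc r) ps \<le> 1"
    if K: "\<And>ps. 0 \<le> K ps \<and> K ps \<le> 1" for K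
    using tree_val_Suc_lower[where L=K, OF p lam K] tree_val_bounds[where L=K and r="Suc r", OF lam K]
    by auto
  then have "\<bar>ln (tree_val lam D N L (Suc r) ps) - ln (tree_val lam D N L' (Suc r) ps)\<bar>
      \<le> - ln (1 / (1 + lam * real \<Delta>))"
    using L L' by (intro abs_ln_diff_le[OF m]) blast+
  also have "\<dots> \<le> initial_log_error lam \<Delta>" using lam by (rule ln_inverse_le_initial_log_error)
  finally show ?thesis .
qed

lemma tree_val_log_contraction:
  assumes lam: "lam > 0"
    and L1: "\<And>ps. 0 < L1 ps \<and> L1 ps \<le> 1" and L2: "\<And>ps. 0 < L2 ps \<and> L2 ps \<le> 1"
    and base: "\<And>ps. simple_path V ps \<Longrightarrow> \<bar>ln (L1 ps) - ln (L2 ps)\<bar> \<le> initial_log_error lam \<Delta>"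
  shows "simple_path V ps \<Longrightarrow>
    \<bar>ln (tree_val lam D N L1 r ps) - ln (tree_val lam D N L2 r ps)\<bar> \<le> depth_error lam \<Delta> r"
proof (induction r arbitrary: ps rule: nat_induct2)
  case 0
  then show ?case using base by (simp add: depth_error_def)
next
  case 1
  have "\<And>ps. 0 \<le> L1 ps \<and> L1 ps \<le> 1" "\<And>ps. 0 \<le> L2 ps \<and> L2 ps \<le> 1"
    using L1 L2 less_imp_le by blast+
  from tree_val_Suc_log_dist_le[where r=0, OF "1" lam this] show ?case by (simp add: depth_error_def)
next
  case (step r)
  let ?u = "last ps"
  let ?A = "{i\<in>{1..D ?u}. N ?u i \<notin> set ps}"
  let ?B = "\<lambda>i. {j\<in>{1..D (N ?u i)}. N (N ?u i) j \<notin> set (ps @ [N ?u i])}"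
  let ?q = "\<lambda>i j. ps @ [N ?u i, N (N ?u i) j]"
  have card: "real (card ?A) \<le> real \<Delta> + 1"
  proof -
    have "card ?A \<le> card {1..D ?u}" by (intro card_mono) auto
    then show ?thesis using degree_last_le[OF step.prems] by simp
  qed
  have "simple_path V (?q i j)" if "i \<in> ?A" "j \<in> ?B i" for i j
    using simple_path_snoc[OF simple_path_snoc[OF step.prems]] that by auto
  then have "\<bar>ln (tree_val lam D N L1 r (?q i j)) - ln (tree_val lam D N L2 r (?q i j))\<bar>
      \<le> depth_error lam \<Delta> r" if "i \<in> ?A" "j \<in> ?B i" for i j
    using step.IH that by blast
  then have "\<bar>ln (tree_val lam D N L1 (r + 2) ps) - ln (tree_val lam D N L2 (r + 2) ps)\<bar>
      \<le> contraction_rate lam (real \<Delta> + 1) * depth_error lam \<Delta> r"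
    unfolding add_2_eq_Suc' tree_val_Suc_Suc
    by (intro two_level_log_lipschitz[OF lam _ card _ depth_error_nonneg[OF lam]])
       (use tree_val_pos[OF lam L1] tree_val_pos[OF lam L2] in auto)
  then show ?case by (simp add: depth_error_def)
qed

end

section \<open>Correctness and query complexity of Approx-Marginal\<close>

lemma sum_powers_le:
  fixes b :: nat
  assumes "b \<ge> 2"
  shows "(\<Sum>h\<in>{1..H}. b ^ (h + 1)) \<le> b ^ (H + 2)"
proof (induction H)
  case 0
  then show ?case by simp
next
  case (Suc H)
  have "(\<Sum>h\<in>{1..Suc H}. b ^ (h + 1)) \<le> b ^ (H + 2) + b ^ (H + 2)" using Suc by simp
  also have "\<dots> \<le> b * b ^ (H + 2)" using assms by (metis mult_2 mult_le_mono1)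
  finally show ?case by simp
qed

context oracle_graph
begin

lemma p_marg_eq_tree_val:
  assumes "v \<in> V" "lam > 0"
  shows "p_marg E ends lam v = tree_val lam D N (path_marg E ends lam) h [v]"
  using tree_val_path_marg[of "[v]" lam h] path_marg_singleton[of E ends lam v] assms
  by (simp add: simple_path_def)

lemma xval_log_error:
  assumes v: "v \<in> V" and lam: "lam > 0"
  shows "\<bar>ln (xval lam D N h [v]) - ln (p_marg E ends lam v)\<bar> \<le> depth_error lam \<Delta> h"
proof -
  have P: "\<And>ps. 0 < path_marg E ends lam ps \<and> path_marg E ends lam ps \<le> 1"
    using path_marg_bounds[OF finite_E lam] by blast
  have "\<bar>ln 1 - ln (path_marg E ends lam ps)\<bar> \<le> initial_log_error lam \<Delta>"
    if "simple_path V ps" for ps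
  proof -
    have "\<bar>ln 1 - ln (path_marg E ends lam ps)\<bar> \<le> - ln (1 / (1 + lam * real \<Delta>))"
      using path_marg_lower[OF that lam] P lam by (intro abs_ln_diff_le) (auto simp: add_pos_nonneg)
    also have "\<dots> \<le> initial_log_error lam \<Delta>" using lam by (rule ln_inverse_le_initial_log_error)
    finally show ?thesis .
  qed
  then have "\<bar>ln (tree_val lam D N (\<lambda>_. 1) h [v]) - ln (tree_val lam D N (path_marg E ends lam) h [v])\<bar>
      \<le> depth_error lam \<Delta> h"
    using v by (intro tree_val_log_contraction[OF lam _ P]) (auto simp: simple_path_def)
  then show ?thesis by (simp only: xval_eq_tree_val_one p_marg_eq_tree_val[OF v lam, of h])
qed

text \<open>
  By antitonicity p lies between x^h (leaf value 1 at depth h) and x^(h-1) (leaf value 0 at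
  depth h), since the true leaf values lie in between.
\<close>

lemma p_marg_log_error_le_step:
  assumes v: "v \<in> V" and lam: "lam > 0" and h: "h \<ge> 1"
  shows "\<bar>ln (xval lam D N h [v]) - ln (p_marg E ends lam v)\<bar> \<le>
         \<bar>ln (xval lam D N h [v]) - ln (xval lam D N (h - 1) [v])\<bar>"
proof -
  let ?P = "path_marg E ends lam"
  let ?t = "\<lambda>L. tree_val lam D N L h [v]"
  have P: "\<And>ps. 0 \<le> ?P ps \<and> ?P ps \<le> 1" using path_marg_bounds[OF finite_E lam] less_imp_le by blast
  have x1: "xval lam D N h [v] = ?t (\<lambda>_. 1)" by (rule xval_eq_tree_val_one)
  have x0: "xval lam D N (h - 1) [v] = ?t (\<lambda>_. 0)"
    using xval_eq_tree_val_zero[of lam D N "h - 1" "[v]"] h by simp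
  have between: "min (?t (\<lambda>_. 0)) (?t (\<lambda>_. 1)) \<le> ?t ?P \<and> ?t ?P \<le> max (?t (\<lambda>_. 0)) (?t (\<lambda>_. 1))"
    using tree_val_alternating_mono[where L="\<lambda>_. 0" and L'="?P" and r=h and ps="[v]" and D=D and N=N, OF lam _ P]
      tree_val_alternating_mono[where L="?P" and L'="\<lambda>_. 1" and r=h and ps="[v]" and D=D and N=N, OF lam P] P
    by (cases "even h") auto
  have "0 < ?t (\<lambda>_. 0)" using tree_val_bounds[of lam "\<lambda>_. 0" D N h "[v]"] lam h by simp
  moreover have "0 < ?t (\<lambda>_. 1)" using tree_val_pos[of lam "\<lambda>_. 1"] lam by simp
  ultimately have "\<bar>ln (?t (\<lambda>_. 1)) - ln (?t ?P)\<bar> \<le> \<bar>ln (?t (\<lambda>_. 1)) - ln (?t (\<lambda>_. 0))\<bar>"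
    using between by (cases "?t (\<lambda>_. 0) \<le> ?t (\<lambda>_. 1)") (auto simp: min_def max_def)
  then show ?thesis by (simp only: x1 x0 p_marg_eq_tree_val[OF v lam, of h])
qed

lemma stopping_rule_holds:
  assumes v: "v \<in> V" and lam: "lam > 0" and h: "h \<ge> 2"
    and small: "2 * depth_error lam \<Delta> (h - 1) \<le> eps / exp 1"
  shows "2 \<le> h \<and> \<bar>ln (xval lam D N h [v]) - ln (xval lam D N (h - 1) [v])\<bar> \<le> eps / exp 1"
  using xval_log_error[OF v lam, of h] xval_log_error[OF v lam, of "h - 1"]
    depth_error_antimono[OF lam, of "h - 1" h \<Delta>] small h by linarith

lemma approx_marginal_correct:
  assumes v: "v \<in> V" and lam: "lam > 0" and eps: "eps > 0"
    and stops: "\<exists>h. 2 \<le> h \<and> \<bar>ln (xval lam D N h [v]) - ln (xval lam D N (h - 1) [v])\<bar> \<le> eps / exp 1"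
  shows "\<bar>approx_marginal lam eps D N v - p_marg E ends lam v\<bar> < eps"
    and "\<bar>ln (approx_marginal lam eps D N v) - ln (p_marg E ends lam v)\<bar> < eps"
proof -
  let ?h = "am_stop lam eps D N v"
  have "2 \<le> ?h \<and> \<bar>ln (xval lam D N ?h [v]) - ln (xval lam D N (?h - 1) [v])\<bar> \<le> eps / exp 1"
    unfolding am_stop_def using stops by (rule LeastI_ex)
  then have "\<bar>ln (xval lam D N ?h [v]) - ln (p_marg E ends lam v)\<bar> \<le> eps / exp 1"
    using p_marg_log_error_le_step[OF v lam, of ?h] by linarith
  also have "eps / exp 1 < eps" using eps by (simp add: divide_less_eq exp_gt_one[of 1] less_mult_imp_div_less)
  finally show log_error: "\<bar>ln (approx_marginal lam eps D N v) - ln (p_marg E ends lam v)\<bar> < eps"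
    unfolding approx_marginal_def .
  have "0 < p_marg E ends lam v \<and> p_marg E ends lam v \<le> 1"
    using path_marg_bounds[OF finite_E lam, of ends "[v]"] by (simp add: path_marg_singleton)
  then have "\<bar>approx_marginal lam eps D N v - p_marg E ends lam v\<bar>
      \<le> \<bar>ln (approx_marginal lam eps D N v) - ln (p_marg E ends lam v)\<bar>"
    unfolding approx_marginal_def using xval_pos[OF lam] xval_le_one[OF lam]
    by (intro abs_diff_le_abs_ln_diff) auto
  then show "\<bar>approx_marginal lam eps D N v - p_marg E ends lam v\<bar> < eps" using log_error by linarith
qed

lemma dfs_queries_le: "simple_path V ps \<Longrightarrow> dfs_queries D N r ps \<le> (\<Delta> + 1) ^ (r + 1)"
proof (induction r arbitrary: ps)
  case 0
  then show ?case by simp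
next
  case (Suc r)
  let ?u = "last ps"
  have "(\<Sum>i\<in>{1..D ?u}. 1 + (if N ?u i \<notin> set ps then dfs_queries D N r (ps @ [N ?u i]) else 0))
      \<le> (\<Sum>i\<in>{1..D ?u}. 1 + (\<Delta> + 1) ^ (r + 1))"
    using Suc.IH simple_path_snoc[OF Suc.prems] by (intro sum_mono) auto
  also have "\<dots> = D ?u * (1 + (\<Delta> + 1) ^ (r + 1))" by simp
  also have "\<dots> \<le> \<Delta> * (1 + (\<Delta> + 1) ^ (r + 1))"
    using degree_last_le[OF Suc.prems] by (rule mult_le_mono1)
  finally have "dfs_queries D N (Suc r) ps \<le> 1 + \<Delta> * (1 + (\<Delta> + 1) ^ (r + 1))" by simp
  also have "\<dots> \<le> (\<Delta> + 1) ^ (Suc r + 1)"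
  proof -
    have "(\<Delta> + 1) * 1 \<le> (\<Delta> + 1) * (\<Delta> + 1) ^ r" by (intro mult_le_mono2) simp
    moreover have "(\<Delta> + 1) ^ (Suc r + 1) = \<Delta> * (\<Delta> + 1) ^ (r + 1) + (\<Delta> + 1) ^ (r + 1)"
      by (simp add: algebra_simps)
    ultimately show ?thesis by (simp add: algebra_simps)
  qed
  finally show ?case .
qed

lemma am_queries_le:
  assumes "v \<in> V"
  shows "am_queries lam eps D N v \<le> (\<Delta> + 2) ^ (am_stop lam eps D N v + 2)"
proof -
  have "dfs_queries D N h [v] \<le> (\<Delta> + 2) ^ (h + 1)" for h
    using dfs_queries_le[where ps="[v]" and r=h] power_mono[of "\<Delta> + 1" "\<Delta> + 2" "h + 1"] assms
    by (simp add: simple_path_def)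
  then have "am_queries lam eps D N v \<le> (\<Sum>h\<in>{1..am_stop lam eps D N v}. (\<Delta> + 2) ^ (h + 1))"
    unfolding am_queries_def by (intro sum_mono)
  also have "\<dots> \<le> (\<Delta> + 2) ^ (am_stop lam eps D N v + 2)" by (rule sum_powers_le) simp
  finally show ?thesis .
qed

end

definition log_rate :: "real \<Rightarrow> nat \<Rightarrow> real" where
  "log_rate lam \<Delta> = - ln (contraction_rate lam (real \<Delta> + 1))"

text \<open>3 + Y bounds the depth nat \<lceil>Y\<rceil> + 2, at which the stopping rule is guaranteed to fire.\<close>

definition stop_depth_bound :: "real \<Rightarrow> real \<Rightarrow> nat \<Rightarrow> real" where
  "stop_depth_bound lam \<epsilon> \<Delta> =
     3 + 2 * max 0 (ln (2 * exp 1 * initial_log_error lam \<Delta> / \<epsilon>)) / log_rate lam \<Delta>"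

definition query_bound :: "real \<Rightarrow> real \<Rightarrow> nat \<Rightarrow> real" where
  "query_bound lam \<epsilon> \<Delta> = (real \<Delta> + 2) powr (stop_depth_bound lam \<epsilon> \<Delta> + 2)"

lemma log_rate_pos: "lam > 0 \<Longrightarrow> log_rate lam \<Delta> > 0"
  using contraction_rate_bounds[of lam "real \<Delta> + 1"] by (simp add: log_rate_def)

lemma two_depth_error_le:
  assumes lam: "lam > 0" and eps: "eps > 0"
    and r: "real (r div 2) * log_rate lam \<Delta> \<ge> max 0 (ln (2 * exp 1 * initial_log_error lam \<Delta> / eps))"
  shows "2 * depth_error lam \<Delta> r \<le> eps / exp 1"
proof -
  define M where "M = initial_log_error lam \<Delta>"
  have M: "M > 0" using initial_log_error_pos[OF lam] by (simp add: M_def)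
  have R: "0 < contraction_rate lam (real \<Delta> + 1)"
    using contraction_rate_bounds[OF lam, of "real \<Delta> + 1"] by simp
  have "contraction_rate lam (real \<Delta> + 1) ^ (r div 2) = exp (- (real (r div 2) * log_rate lam \<Delta>))"
    using R by (simp add: log_rate_def exp_of_nat_mult)
  also have "\<dots> \<le> exp (- ln (2 * exp 1 * M / eps))" using r by (simp add: M_def)
  also have "\<dots> = eps / (2 * exp 1 * M)" using M eps by (simp add: exp_minus)
  finally show ?thesis using M by (simp add: depth_error_def M_def[symmetric] field_simps)
qed

lemma stop_depth_witness:
  fixes Y :: real
  assumes "Y \<ge> 0"
  shows "Y / 2 \<le> real ((nat \<lceil>Y\<rceil> + 2 - 1) div 2)" "real (nat \<lceil>Y\<rceil> + 2) \<le> 3 + Y"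
proof -
  have "2 * ((nat \<lceil>Y\<rceil> + 1) div 2) \<ge> nat \<lceil>Y\<rceil>" by linarith
  then show "Y / 2 \<le> real ((nat \<lceil>Y\<rceil> + 2 - 1) div 2)" using assms by linarith
  show "real (nat \<lceil>Y\<rceil> + 2) \<le> 3 + Y" using assms by linarith
qed

context oracle_graph
begin

lemma approx_marginal_guarantee:
  assumes v: "v \<in> V" and lam: "lam > 0" and eps: "\<epsilon> > 0"
  shows "\<bar>approx_marginal lam \<epsilon> D N v - p_marg E ends lam v\<bar> < \<epsilon>"
    and "\<bar>ln (approx_marginal lam \<epsilon> D N v) - ln (p_marg E ends lam v)\<bar> < \<epsilon>"
    and "real (am_queries lam \<epsilon> D N v) \<le> query_bound lam \<epsilon> \<Delta>"
proof -
  define Y where "Y = 2 * max 0 (ln (2 * exp 1 * initial_log_error lam \<Delta> / \<epsilon>)) / log_rate lam \<Delta>"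
  define h where "h = nat \<lceil>Y\<rceil> + 2"
  have a: "log_rate lam \<Delta> > 0" by (rule log_rate_pos[OF lam])
  then have Y: "Y \<ge> 0" by (simp add: Y_def)
  have small: "2 * depth_error lam \<Delta> (h - 1) \<le> \<epsilon> / exp 1"
    using stop_depth_witness(1)[OF Y] a
    by (intro two_depth_error_le[OF lam eps]) (simp add: h_def Y_def field_simps)
  have "2 \<le> h" unfolding h_def by simp
  then have stops: "2 \<le> h \<and> \<bar>ln (xval lam D N h [v]) - ln (xval lam D N (h - 1) [v])\<bar> \<le> \<epsilon> / exp 1"
    by (rule stopping_rule_holds[OF v lam _ small])
  then show "\<bar>approx_marginal lam \<epsilon> D N v - p_marg E ends lam v\<bar> < \<epsilon>"
    and "\<bar>ln (approx_marginal lam \<epsilon> D N v) - ln (p_marg E ends lam v)\<bar> < \<epsilon>"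
    using approx_marginal_correct[OF v lam eps] by blast+
  have "am_stop lam \<epsilon> D N v \<le> h"
    unfolding am_stop_def by (rule Least_le) (rule stops)
  then have "real (am_stop lam \<epsilon> D N v + 2) \<le> stop_depth_bound lam \<epsilon> \<Delta> + 2"
    using stop_depth_witness(2)[OF Y] by (simp add: h_def Y_def stop_depth_bound_def)
  then have "(real \<Delta> + 2) powr real (am_stop lam \<epsilon> D N v + 2) \<le> query_bound lam \<epsilon> \<Delta>"
    unfolding query_bound_def by (intro powr_mono) auto
  moreover have "real (am_queries lam \<epsilon> D N v) \<le> (real \<Delta> + 2) powr real (am_stop lam \<epsilon> D N v + 2)"
  proof -
    have "real ((\<Delta> + 2) ^ n) = (real \<Delta> + 2) powr real n" for n :: nat
      by (simp add: powr_realpow add.commute)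
    then show ?thesis using am_queries_le[OF v, of lam \<epsilon>] by (metis of_nat_le_iff)
  qed
  ultimately show "real (am_queries lam \<epsilon> D N v) \<le> query_bound lam \<epsilon> \<Delta>" by linarith
qed

end

section \<open>Growth of the query bound\<close>

lemma inverse_log_rate_le:
  assumes lam: "lam > 0" and \<Delta>: "real \<Delta> \<ge> 1"
  shows "1 / log_rate lam \<Delta> \<le> (sqrt (2 * lam + 1) + 1) / 2 * sqrt (real \<Delta>)"
proof -
  define s where "s = sqrt (lam * (real \<Delta> + 1) + 1)"
  let ?R = "contraction_rate lam (real \<Delta> + 1)"
  have s1: "s > 1" using lam unfolding s_def by (simp add: add_pos_nonneg)
  have R: "0 < ?R" using contraction_rate_bounds[OF lam, of "real \<Delta> + 1"] by simp
  have "?R = (s - 1) / (s + 1)" by (simp add: contraction_rate_def s_def)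
  then have "1 - ?R = 2 / (s + 1)" using s1 by (simp add: field_simps)
  moreover have "1 - ?R \<le> log_rate lam \<Delta>"
    using ln_le_minus_one[OF R] by (simp add: log_rate_def)
  ultimately have "1 / log_rate lam \<Delta> \<le> 1 / (2 / (s + 1))"
    using s1 log_rate_pos[OF lam, of \<Delta>] by (intro divide_left_mono) auto
  also have "\<dots> = (s + 1) / 2" by simp
  also have "\<dots> \<le> (sqrt (2 * lam + 1) + 1) / 2 * sqrt (real \<Delta>)"
  proof -
    have "lam * 1 \<le> lam * real \<Delta>" using \<Delta> lam by (intro mult_left_mono) auto
    then have "lam * (real \<Delta> + 1) + 1 \<le> (2 * lam + 1) * real \<Delta>"
      using \<Delta> by (simp add: algebra_simps)
    then have "s \<le> sqrt (2 * lam + 1) * sqrt (real \<Delta>)"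
      unfolding s_def by (simp flip: real_sqrt_mult)
    moreover have "1 \<le> sqrt (real \<Delta>)" using \<Delta> by simp
    ultimately have "s + 1 \<le> sqrt (2 * lam + 1) * sqrt (real \<Delta>) + sqrt (real \<Delta>)" by linarith
    then show ?thesis by (simp add: field_simps)
  qed
  finally show ?thesis .
qed

lemma initial_log_error_le:
  assumes lam: "lam > 0" and \<Delta>: "real \<Delta> \<ge> 1"
  shows "initial_log_error lam \<Delta> \<le> ln (1 + 2 * lam) + ln (real \<Delta>)"
proof -
  have "lam * 1 \<le> lam * real \<Delta>" using \<Delta> lam by (intro mult_left_mono) auto
  then have "1 + lam * (real \<Delta> + 1) \<le> (1 + 2 * lam) * real \<Delta>"
    using \<Delta> by (simp add: algebra_simps)
  then have "initial_log_error lam \<Delta> \<le> ln ((1 + 2 * lam) * real \<Delta>)"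
    unfolding initial_log_error_def using lam by (intro ln_mono) (auto simp: add_pos_nonneg)
  then show ?thesis using lam \<Delta> by (simp add: ln_mult)
qed

lemma ln_plus_two_le:
  assumes "real \<Delta> \<ge> 1"
  shows "ln (real \<Delta> + 2) \<le> 2 * (1 + ln (real \<Delta>))"
proof -
  have "ln (real \<Delta> + 2) \<le> ln (3 * real \<Delta>)" using assms by (intro ln_mono) auto
  also have "\<dots> = ln 3 + ln (real \<Delta>)" using assms by (simp add: ln_mult)
  finally have "ln (real \<Delta> + 2) \<le> ln 3 + ln (real \<Delta>)" .
  moreover have "ln (3::real) \<le> 2" using ln_le_minus_one[of "3::real"] by simp
  ultimately show ?thesis using ln_ge_zero[OF assms] by (smt (verit))
qed

definition query_exponent_const :: "real \<Rightarrow> real" where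
  "query_exponent_const lam = 2 * (10 + (sqrt (2 * lam + 1) + 1) * (5 + 2 * ln (1 + 2 * lam)))"

lemma query_exponent_const_ge: "lam > 0 \<Longrightarrow> query_exponent_const lam \<ge> 20"
  unfolding query_exponent_const_def by (simp add: add_nonneg_nonneg)

lemma max_ln_error_ratio_le:
  assumes lam: "lam > 0" and \<Delta>: "real \<Delta> \<ge> 1" and eps: "0 < \<epsilon>" "\<epsilon> \<le> 1"
  shows "max 0 (ln (2 * exp 1 * initial_log_error lam \<Delta> / \<epsilon>))
         \<le> (2 + ln (1 + 2 * lam)) * (1 + ln (real \<Delta>)) + ln (1 / \<epsilon>)"
proof -
  define M where "M = initial_log_error lam \<Delta>"
  have M: "M > 0" unfolding M_def by (rule initial_log_error_pos[OF lam])
  have "ln (2 * exp 1 * M / \<epsilon>) = ln 2 + 1 + ln M + ln (1 / \<epsilon>)"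
    using M eps by (simp add: ln_div ln_mult)
  also have "\<dots> \<le> 1 + M + ln (1 / \<epsilon>)" using ln_le_minus_one[OF M] ln_2_less_1 by linarith
  also have "\<dots> \<le> 1 + ln (1 + 2 * lam) + ln (real \<Delta>) + ln (1 / \<epsilon>)"
    using initial_log_error_le[OF lam \<Delta>] by (simp add: M_def)
  also have "\<dots> \<le> (2 + ln (1 + 2 * lam)) * (1 + ln (real \<Delta>)) + ln (1 / \<epsilon>)"
    using lam \<Delta> mult_left_mono[of 1 "2 + ln (1 + 2 * lam)" "ln (real \<Delta>)"] by (simp add: algebra_simps)
  finally show ?thesis
    using lam \<Delta> eps by (simp add: M_def add_nonneg_nonneg)
qed

lemma constant_plus_product_le:
  fixes c1 c2 q w l :: real
  assumes c1: "c1 > 0" and c2: "c2 \<ge> 1" and q: "q \<ge> 1" and w: "w \<ge> 1" and l: "l \<ge> 1/2"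
  shows "5 + 2 * (c2 * w + l) * (c1 * q) \<le> l * q * w * (10 + 2 * c1 * (2 * c2 + 1))"
proof -
  have "c2 * w \<le> 2 * c2 * w * l" using c2 w l mult_left_mono[of 1 "2 * l" "c2 * w"] by simp
  moreover have "l \<le> l * w" using l w by (simp add: mult_le_cancel_left1)
  ultimately have "c2 * w + l \<le> 2 * c2 * w * l + l * w" by linarith
  then have "2 * (c2 * w + l) * (c1 * q) \<le> 2 * (2 * c2 * w * l + l * w) * (c1 * q)"
    using c1 q by (intro mult_right_mono) auto
  moreover have "1 \<le> q * w" using q w mult_mono[of 1 q 1 w] by simp
  then have "10 * l * 1 \<le> 10 * l * (q * w)" using l by (intro mult_left_mono) auto
  then have "5 \<le> 10 * l * (q * w)" using l by linarith
  ultimately show ?thesis by (simp add: algebra_simps)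
qed

lemma ln_query_bound_le:
  assumes lam: "lam > 0" and \<Delta>: "real \<Delta> \<ge> 1" and eps: "0 < \<epsilon>" "\<epsilon> \<le> 1/2"
  shows "ln (query_bound lam \<epsilon> \<Delta>)
         \<le> query_exponent_const lam * ln (1 / \<epsilon>) * sqrt (real \<Delta>) * (1 + ln (real \<Delta>))^2"
proof -
  define c1 where "c1 = (sqrt (2 * lam + 1) + 1) / 2"
  define c2 where "c2 = 2 + ln (1 + 2 * lam)"
  define q where "q = sqrt (real \<Delta>)"
  define w where "w = 1 + ln (real \<Delta>)"
  define l where "l = ln (1 / \<epsilon>)"
  define m where "m = max 0 (ln (2 * exp 1 * initial_log_error lam \<Delta> / \<epsilon>))"
  have c1: "c1 > 0" unfolding c1_def using lam by (simp add: add_nonneg_pos)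
  have c2: "c2 \<ge> 1" unfolding c2_def using lam by simp
  have q: "q \<ge> 1" and w: "w \<ge> 1" using \<Delta> by (simp_all add: q_def w_def)
  have "ln 2 \<le> l" unfolding l_def using eps by (intro ln_mono) (auto simp: field_simps)
  then have l: "l \<ge> 1/2" using ln_2_less_1 ln_le_minus_one[of "1/2::real"] by (simp add: ln_div)
  have a: "log_rate lam \<Delta> > 0" by (rule log_rate_pos[OF lam])
  have m: "0 \<le> m" "m \<le> c2 * w + l"
    using max_ln_error_ratio_le[OF lam \<Delta>, of \<epsilon>] eps by (simp_all add: m_def c2_def w_def l_def)
  have "1 / log_rate lam \<Delta> \<le> c1 * q"
    using inverse_log_rate_le[OF lam \<Delta>] by (simp add: c1_def q_def)
  then have "2 * m * (1 / log_rate lam \<Delta>) \<le> 2 * (c2 * w + l) * (c1 * q)"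
    using m a c1 q by (intro mult_mono) auto
  then have "5 + 2 * m / log_rate lam \<Delta> \<le> l * q * w * (10 + 2 * c1 * (2 * c2 + 1))"
    using constant_plus_product_le[OF c1 c2 q w l] by simp
  moreover have "0 \<le> 5 + 2 * m / log_rate lam \<Delta>" using m a by simp
  ultimately have "(5 + 2 * m / log_rate lam \<Delta>) * ln (real \<Delta> + 2)
      \<le> (l * q * w * (10 + 2 * c1 * (2 * c2 + 1))) * (2 * w)"
    using ln_plus_two_le[OF \<Delta>] by (intro mult_mono) (auto simp: w_def)
  moreover have "ln (query_bound lam \<epsilon> \<Delta>) = (5 + 2 * m / log_rate lam \<Delta>) * ln (real \<Delta> + 2)"
    unfolding query_bound_def stop_depth_bound_def m_def by (simp add: ln_powr)
  ultimately have "ln (query_bound lam \<epsilon> \<Delta>) \<le> (l * q * w * (10 + 2 * c1 * (2 * c2 + 1))) * (2 * w)"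
    by simp
  also have "\<dots> = query_exponent_const lam * l * q * w^2"
    by (simp add: query_exponent_const_def c1_def c2_def power2_eq_square algebra_simps)
  finally show ?thesis by (simp add: l_def q_def w_def)
qed

lemma query_bound_quasi_polynomial:
  assumes lam: "lam > 0"
  shows "\<exists>C>0. \<forall>\<Delta>::nat. \<forall>\<epsilon>::real. 1 \<le> \<Delta> \<and> 0 < \<epsilon> \<and> \<epsilon> \<le> 1/2 \<longrightarrow>
         (let g = C * sqrt (real \<Delta>) * (1 + ln (real \<Delta>)) powr C;
              X = (1/\<epsilon>) powr g
          in query_bound lam \<epsilon> \<Delta> \<le> C * X * (1 + ln X) powr C)"
proof (intro exI[of _ "query_exponent_const lam"] conjI allI impI)
  let ?C = "query_exponent_const lam"
  have C: "?C \<ge> 20" by (rule query_exponent_const_ge[OF lam])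
  then show "?C > 0" by simp
  fix \<Delta> :: nat and \<epsilon> :: real
  assume "1 \<le> \<Delta> \<and> 0 < \<epsilon> \<and> \<epsilon> \<le> 1/2"
  then have \<Delta>: "real \<Delta> \<ge> 1" and eps: "0 < \<epsilon>" "\<epsilon> \<le> 1/2" by auto
  define w where "w = 1 + ln (real \<Delta>)"
  define l where "l = ln (1 / \<epsilon>)"
  define g where "g = ?C * sqrt (real \<Delta>) * w powr ?C"
  define X where "X = (1 / \<epsilon>) powr g"
  have w: "w \<ge> 1" using \<Delta> by (simp add: w_def)
  have l: "l \<ge> 0" using eps by (simp add: l_def)
  have X: "X > 0" and ln_X: "ln X = g * l" using eps by (simp_all add: X_def l_def ln_powr)
  have "w^2 = w powr 2" using w by (simp add: powr_realpow)
  also have "\<dots> \<le> w powr ?C" using w C by (intro powr_mono) auto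
  finally have "?C * l * sqrt (real \<Delta>) * w^2 \<le> ?C * l * sqrt (real \<Delta>) * w powr ?C"
    using C l by (intro mult_left_mono) auto
  then have "ln (query_bound lam \<epsilon> \<Delta>) \<le> ln X"
    using ln_query_bound_le[OF lam \<Delta> eps] by (simp add: ln_X g_def l_def w_def algebra_simps)
  moreover have "query_bound lam \<epsilon> \<Delta> > 0" by (simp add: query_bound_def)
  ultimately have "query_bound lam \<epsilon> \<Delta> \<le> X" using X by (metis ln_le_cancel_iff)
  moreover have "1 \<le> (1 + ln X) powr ?C"
    using ln_X w C l by (intro ge_one_powr_ge_zero) (auto simp: g_def)
  then have "X * 1 \<le> X * (?C * (1 + ln X) powr ?C)"
    using X C mult_mono[of 1 ?C 1 "(1 + ln X) powr ?C"] by (intro mult_left_mono) auto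
  ultimately have "query_bound lam \<epsilon> \<Delta> \<le> ?C * X * (1 + ln X) powr ?C"
    by (simp add: algebra_simps)
  then show "let g = ?C * sqrt (real \<Delta>) * (1 + ln (real \<Delta>)) powr ?C; X = (1/\<epsilon>) powr g
          in query_bound lam \<epsilon> \<Delta> \<le> ?C * X * (1 + ln X) powr ?C"
    unfolding Let_def X_def g_def w_def .
qed

lemma ln_query_bound_over_ln_tendsto:
  assumes lam: "lam > 0"
  shows "((\<lambda>\<epsilon>. ln (query_bound lam \<epsilon> \<Delta>) / ln (1/\<epsilon>))
           \<longlongrightarrow> 2 * ln (real \<Delta> + 2) / log_rate lam \<Delta>) (at_right 0)"
proof -
  define M where "M = initial_log_error lam \<Delta>"
  define a where "a = log_rate lam \<Delta>"
  define b where "b = ln (real \<Delta> + 2)"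
  define K where "K = (5 + 2 * ln (2 * exp 1 * M) / a) * b"
  have M: "M > 0" unfolding M_def by (rule initial_log_error_pos[OF lam])
  have a: "a > 0" unfolding a_def by (rule log_rate_pos[OF lam])
  have "filterlim (\<lambda>\<epsilon>::real. ln (1/\<epsilon>)) at_top (at_right 0)" by real_asymp
  then have "((\<lambda>\<epsilon>. K / ln (1/\<epsilon>) + 2 * b / a) \<longlongrightarrow> 0 + 2 * b / a) (at_right 0)"
    by (intro tendsto_add tendsto_const tendsto_divide_0[OF tendsto_const]
        filterlim_at_top_imp_at_infinity)
  moreover have "eventually (\<lambda>\<epsilon>. K / ln (1/\<epsilon>) + 2 * b / a = ln (query_bound lam \<epsilon> \<Delta>) / ln (1/\<epsilon>))
      (at_right 0)"
  proof (rule eventually_at_rightI)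
    fix \<epsilon> :: real assume "\<epsilon> \<in> {0<..<min 1 (2 * exp 1 * M)}"
    then have eps: "0 < \<epsilon>" "\<epsilon> < 1" "\<epsilon> < 2 * exp 1 * M" by auto
    have "1 < 2 * exp 1 * M / \<epsilon>" using eps by (simp add: field_simps)
    then have "max 0 (ln (2 * exp 1 * M / \<epsilon>)) = ln (2 * exp 1 * M) + ln (1/\<epsilon>)"
      using M eps by (simp add: ln_div)
    then have Q: "ln (query_bound lam \<epsilon> \<Delta>) = (5 + 2 * (ln (2 * exp 1 * M) + ln (1/\<epsilon>)) / a) * b"
      unfolding query_bound_def stop_depth_bound_def by (simp add: ln_powr M_def a_def b_def)
    have "ln (1/\<epsilon>) > 0" using eps by simp
    then show "K / ln (1/\<epsilon>) + 2 * b / a = ln (query_bound lam \<epsilon> \<Delta>) / ln (1/\<epsilon>)"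
      using a unfolding K_def Q by (simp add: field_simps)
  qed (use M in simp)
  ultimately show ?thesis using tendsto_cong by (fastforce simp: a_def b_def)
qed

text \<open>
  With s = sqrt (lam (Delta + 1) + 1) the log-rate is ln (1 + 2 / (s - 1)), which is
  asymptotically 2 / s, so sqrt Delta times it tends to 2 / sqrt lam.
\<close>

lemma sqrt_mult_log_rate_tendsto:
  assumes lam: "lam > 0"
  shows "((\<lambda>\<Delta>. sqrt (real \<Delta>) * log_rate lam \<Delta>) \<longlongrightarrow> 2 * sqrt (inverse lam)) sequentially"
proof -
  define f where "f x = sqrt x * ln (1 + 2 / (sqrt (x + 1) - 1))" for x :: real
  have "(f \<longlongrightarrow> 2) at_top" unfolding f_def by real_asymp
  moreover have "filterlim (\<lambda>n::nat. lam * (real n + 1)) at_top sequentially" using lam by real_asymp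
  ultimately have f: "((\<lambda>n. f (lam * (real n + 1))) \<longlongrightarrow> 2) sequentially"
    by (rule filterlim_compose)
  have "((\<lambda>n::nat. real n / (lam * (real n + 1))) \<longlongrightarrow> inverse lam) sequentially"
    using lam by real_asymp
  then have ratio: "((\<lambda>n::nat. sqrt (real n / (lam * (real n + 1)))) \<longlongrightarrow> sqrt (inverse lam)) sequentially"
    by (rule tendsto_real_sqrt)
  have "sqrt (real n) * log_rate lam n = f (lam * (real n + 1)) * sqrt (real n / (lam * (real n + 1)))"
    for n :: nat
  proof -
    define x where "x = lam * (real n + 1)"
    define s where "s = sqrt (x + 1)"
    have x: "x > 0" using lam by (simp add: x_def add_pos_nonneg)
    then have s: "s > 1" by (simp add: s_def)
    have "contraction_rate lam (real n + 1) = (s - 1) / (s + 1)"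
      by (simp add: contraction_rate_def s_def x_def)
    moreover have "1 + 2 / (s - 1) = 1 / ((s - 1) / (s + 1))" using s by (simp add: field_simps)
    ultimately have "log_rate lam n = ln (1 + 2 / (s - 1))"
      using s by (simp add: log_rate_def ln_div)
    moreover have "sqrt (real n) = sqrt x * sqrt (real n / x)"
      using x by (simp flip: real_sqrt_mult)
    ultimately show ?thesis by (simp add: f_def s_def x_def algebra_simps)
  qed
  then show ?thesis using tendsto_mult[OF f ratio] by simp
qed

lemma query_exponent_tendsto:
  assumes lam: "lam > 0"
  shows "((\<lambda>\<Delta>. (2 * ln (real \<Delta> + 2) / log_rate lam \<Delta>) / (sqrt (real \<Delta>) * ln (real \<Delta>)))
           \<longlongrightarrow> sqrt lam) sequentially"
proof -
  have "((\<lambda>n::nat. ln (real n + 2) / ln (real n)) \<longlongrightarrow> 1) sequentially" by real_asymp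
  moreover have "2 * sqrt (inverse lam) \<noteq> 0" using lam by simp
  ultimately have "((\<lambda>n. 2 / (sqrt (real n) * log_rate lam n) * (ln (real n + 2) / ln (real n)))
      \<longlongrightarrow> 2 / (2 * sqrt (inverse lam)) * 1) sequentially"
    by (intro tendsto_mult tendsto_divide tendsto_const sqrt_mult_log_rate_tendsto[OF lam])
  moreover have "2 / (2 * sqrt (inverse lam)) * 1 = sqrt lam"
    using lam by (simp add: field_simps flip: real_sqrt_mult)
  moreover have "2 / (sqrt (real n) * log_rate lam n) * (ln (real n + 2) / ln (real n))
      = (2 * ln (real n + 2) / log_rate lam n) / (sqrt (real n) * ln (real n))" for n :: nat
    by (simp add: mult_ac)
  ultimately show ?thesis by (simp only: mult_1_right)
qed

theorem proposition1:
  fixes lam :: real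
  assumes "lam > 0"
  shows "\<exists>Qbar :: real \<Rightarrow> nat \<Rightarrow> real.
    (\<forall>(V::nat set) (E::nat set) (ends::nat \<Rightarrow> nat \<times> nat) (D::nat \<Rightarrow> nat)
        (N::nat \<Rightarrow> nat \<Rightarrow> nat) (v::nat) (\<Delta>::nat) (\<epsilon>::real).
       graph V E ends \<and> oracle_rep V E ends D N \<and> (\<forall>u\<in>V. D u \<le> \<Delta>) \<and> v \<in> V \<and> \<epsilon> > 0
       \<longrightarrow> \<bar>approx_marginal lam \<epsilon> D N v - p_marg E ends lam v\<bar> < \<epsilon>
         \<and> \<bar>ln (approx_marginal lam \<epsilon> D N v) - ln (p_marg E ends lam v)\<bar> < \<epsilon>
         \<and> real (am_queries lam \<epsilon> D N v) \<le> Qbar \<epsilon> \<Delta>)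
    \<and> (\<exists>C>0. \<forall>\<Delta>::nat. \<forall>\<epsilon>::real. 1 \<le> \<Delta> \<and> 0 < \<epsilon> \<and> \<epsilon> \<le> 1/2 \<longrightarrow>
         (let g = C * sqrt (real \<Delta>) * (1 + ln (real \<Delta>)) powr C;
              X = (1/\<epsilon>) powr g
          in Qbar \<epsilon> \<Delta> \<le> C * X * (1 + ln X) powr C))
    \<and> (\<exists>L :: nat \<Rightarrow> real.
         (\<forall>\<Delta>. ((\<lambda>\<epsilon>. ln (Qbar \<epsilon> \<Delta>) / ln (1/\<epsilon>)) \<longlongrightarrow> L \<Delta>) (at_right 0))
       \<and> ((\<lambda>\<Delta>. L \<Delta> / (sqrt (real \<Delta>) * ln (real \<Delta>))) \<longlongrightarrow> sqrt lam) sequentially)"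
proof -
  have guarantee: "\<bar>approx_marginal lam \<epsilon> D N v - p_marg E ends lam v\<bar> < \<epsilon>
      \<and> \<bar>ln (approx_marginal lam \<epsilon> D N v) - ln (p_marg E ends lam v)\<bar> < \<epsilon>
      \<and> real (am_queries lam \<epsilon> D N v) \<le> query_bound lam \<epsilon> \<Delta>"
    if "graph V E ends" "oracle_rep V E ends D N" "\<forall>u\<in>V. D u \<le> \<Delta>" "v \<in> V" "\<epsilon> > 0"
    for V E :: "nat set" and ends :: "nat \<Rightarrow> nat \<times> nat" and D N v \<Delta> \<epsilon>
  proof -
    interpret oracle_graph V E ends D N \<Delta> using that by unfold_locales auto
    show ?thesis using approx_marginal_guarantee[OF that(4) assms that(5)] by blast
  qed
  let ?L = "\<lambda>\<Delta>. 2 * ln (real \<Delta> + 2) / log_rate lam \<Delta>"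
  have exponent_in_eps: "((\<lambda>\<epsilon>. ln (query_bound lam \<epsilon> \<Delta>) / ln (1/\<epsilon>)) \<longlongrightarrow> ?L \<Delta>) (at_right 0)" for \<Delta>
    by (rule ln_query_bound_over_ln_tendsto[OF assms])
  have exponent_in_Delta: "((\<lambda>\<Delta>. ?L \<Delta> / (sqrt (real \<Delta>) * ln (real \<Delta>))) \<longlongrightarrow> sqrt lam) sequentially"
    by (rule query_exponent_tendsto[OF assms])
  show ?thesis
    by (rule exI[of _ "query_bound lam"], intro conjI)
      (use guarantee in blast, rule query_bound_quasi_polynomial[OF assms],
       rule exI[of _ ?L], use exponent_in_eps exponent_in_Delta in blast)
qed

end
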